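(* Let $q'>0$, $e'\in(0,1)$, $q_{\max}>0$, $\mathcal D_3=\{(\omega,\omega'):0\le\omega\le\pi/2,\ 0\le\omega'\le\pi\}$, $\mathcal D_4=\{(q,e):0<q\le q_{\max},\ 0\le e\le1\}$. Then: (i) for each $(q,e)\in\mathcal D_4$ and $(\omega,\omega')\in\mathcal D_3$, $$\delta_{\rm int}(q,e,\omega,\omega')\ge\delta_{\rm int}(q,e,0,\pi)=q'-\frac{q(1+e)}{1-e},\qquad \delta_{\rm ext}(q,e,\omega,\omega')\ge\delta_{\rm ext}(q,e,0,\pi)=q-Q';$$ hence for given $(q,e)$ there are internal nodes for all $(\omega,\omega')\in\mathcal D_3$ iff $q'-\frac{q(1+e)}{1-e}>0$, and external nodes for all $(\omega,\omega')\in\mathcal D_3$ iff $q-Q'>0$; (ii) if $q'-\frac{q(1+e)}{1-e}\le0$ and $q-Q'\le0$, then there exists $(\omega,\omega')\in\mathcal D_3$ with $d^+d^-=0$.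
   Context: For $q>0$, $e\in[0,1]$ and angles $\omega,\omega'$, define $r_{\pm}=\frac{q(1+e)}{1\pm e\cos\omega}$, $r'_{\pm}=\frac{q'(1+e')}{1\pm e'\cos\omega'}$ (extended-real values allowed; $\frac{q(1+e)}{1-e}=+\infty$ for $e=1$), $d^+=r'_+-r_+$, $d^-=r'_--r_-$, $\delta_{\rm int}=\min\{d^+,d^-\}$, $\delta_{\rm ext}=\min\{-d^+,-d^-\}$, $Q'=\frac{q'(1+e')}{1-e'}$. Internal nodes: $d^\pm>0$; external nodes: $d^\pm<0$. *)

theory Defs
  imports "HOL-Analysis.Analysis"
begin

text \<open>Extended-real conventions: a fraction q(1+e)/0 with q(1+e) > 0 is +\<infinity>.\<close>

definition r_plus :: "real \<Rightarrow> real \<Rightarrow> real \<Rightarrow> ereal" where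
  "r_plus q e w = (if 1 + e * cos w = 0 then \<infinity> else ereal (q * (1 + e) / (1 + e * cos w)))"

definition r_minus :: "real \<Rightarrow> real \<Rightarrow> real \<Rightarrow> ereal" where
  "r_minus q e w = (if 1 - e * cos w = 0 then \<infinity> else ereal (q * (1 + e) / (1 - e * cos w)))"

definition apo :: "real \<Rightarrow> real \<Rightarrow> ereal" where
  "apo q e = (if e = 1 then \<infinity> else ereal (q * (1 + e) / (1 - e)))"

definition d_plus :: "real \<Rightarrow> real \<Rightarrow> real \<Rightarrow> real \<Rightarrow> real \<Rightarrow> real \<Rightarrow> ereal" where
  "d_plus q' e' q e w w' = r_plus q' e' w' - r_plus q e w"

definition d_minus :: "real \<Rightarrow> real \<Rightarrow> real \<Rightarrow> real \<Rightarrow> real \<Rightarrow> real \<Rightarrow> ereal" where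
  "d_minus q' e' q e w w' = r_minus q' e' w' - r_minus q e w"

definition delta_int :: "real \<Rightarrow> real \<Rightarrow> real \<Rightarrow> real \<Rightarrow> real \<Rightarrow> real \<Rightarrow> ereal" where
  "delta_int q' e' q e w w' = min (d_plus q' e' q e w w') (d_minus q' e' q e w w')"

definition delta_ext :: "real \<Rightarrow> real \<Rightarrow> real \<Rightarrow> real \<Rightarrow> real \<Rightarrow> real \<Rightarrow> ereal" where
  "delta_ext q' e' q e w w' = min (- d_plus q' e' q e w w') (- d_minus q' e' q e w w')"

definition D3 :: "(real \<times> real) set" where
  "D3 = {(w, w'). 0 \<le> w \<and> w \<le> pi / 2 \<and> 0 \<le> w' \<and> w' \<le> pi}"

definition D4 :: "real \<Rightarrow> (real \<times> real) set" where
  "D4 qmax = {(q, e). 0 < q \<and> q \<le> qmax \<and> 0 \<le> e \<and> e \<le> 1}"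

end

theory Submission
  imports Defs
begin

text \<open>For every angle, both radii of an orbit lie between its perihelion distance \<open>q\<close> and its
  aphelion distance \<open>q(1+e)/(1-e)\<close>, and these extremes are attained at \<open>\<omega> = 0\<close> and \<open>\<omega> = \<pi>\<close>.
  Hence \<open>d\<^sup>\<plusminus> \<ge> q' - q(1+e)/(1-e)\<close> and \<open>-d\<^sup>\<plusminus> \<ge> q - Q'\<close> for all angles, with equality in
  \<open>d\<^sup>-\<close> resp. \<open>d\<^sup>+\<close> at \<open>(0, \<pi>)\<close>. For (ii), inverting \<open>r = q(1+e)/(1 + e cos \<omega>)\<close> with
  \<open>arccos\<close> yields an angle in \<open>D3\<close> at which a radius of one orbit equals the perihelion
  distance of the other; which radius depends on whether \<open>q' \<le> q\<close>, \<open>q < q' \<le> q(1+e)\<close> or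
  \<open>q(1+e) < q'\<close>.\<close>

lemma r_minus_eq_r_plus_pi_minus: "r_minus q e w = r_plus q e (pi - w)"
  by (simp add: r_minus_def r_plus_def)

lemma r_plus_zero: "0 \<le> e \<Longrightarrow> r_plus q e 0 = ereal q"
  by (simp add: r_plus_def)

lemma r_plus_pi: "r_plus q e pi = apo q e"
  by (simp add: r_plus_def apo_def)

lemma apo_ge_perihelion: "0 \<le> q \<Longrightarrow> 0 \<le> e \<Longrightarrow> e \<le> 1 \<Longrightarrow> ereal q \<le> apo q e"
  by (simp add: apo_def le_divide_eq mult_left_mono)

lemma r_plus_bounds:
  assumes "0 \<le> q" "0 \<le> e" "e \<le> 1"
  shows "ereal q \<le> r_plus q e w \<and> r_plus q e w \<le> apo q e"
proof (cases "1 + e * cos w = 0")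
  case True
  then have "e = 1"
    using assms mult_left_mono[of "-1" "cos w" e] by (smt (verit) cos_ge_minus_one)
  with True show ?thesis by (simp add: r_plus_def apo_def)
next
  case False
  have lower: "1 - e \<le> 1 + e * cos w"
    using assms mult_left_mono[of "-1" "cos w" e] by simp
  have upper: "1 + e * cos w \<le> 1 + e"
    using assms mult_left_mono[of "cos w" 1 e] by simp
  have pos: "0 < 1 + e * cos w"
    using False lower assms by simp
  have "q \<le> q * (1 + e) / (1 + e * cos w)"
    using pos assms mult_left_mono[OF upper, of q] by (simp add: le_divide_eq)
  moreover have "e < 1 \<Longrightarrow> q * (1 + e) / (1 + e * cos w) \<le> q * (1 + e) / (1 - e)"
    using pos lower assms by (intro divide_left_mono) auto
  ultimately show ?thesis
    using False assms by (auto simp: r_plus_def apo_def)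
qed

lemma d_minus_eq_d_plus: "d_minus q' e' q e w w' = d_plus q' e' q e (pi - w) (pi - w')"
  by (simp add: d_minus_def d_plus_def r_minus_eq_r_plus_pi_minus)

lemma d_plus_ge:
  assumes "0 \<le> q'" "0 \<le> e'" "e' \<le> 1" "0 \<le> q" "0 \<le> e" "e \<le> 1"
  shows "ereal q' - apo q e \<le> d_plus q' e' q e w w'"
  unfolding d_plus_def using assms r_plus_bounds by (intro ereal_minus_mono) blast+

lemma neg_d_plus_ge:
  assumes "0 \<le> q'" "0 \<le> e'" "e' < 1" "0 \<le> q" "0 \<le> e" "e \<le> 1"
  shows "ereal q - apo q' e' \<le> - d_plus q' e' q e w w'"
proof -
  have "ereal q - apo q' e' \<le> r_plus q e w - r_plus q' e' w'"
    using assms r_plus_bounds by (intro ereal_minus_mono) auto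
  also have "\<dots> = - d_plus q' e' q e w w'"
    unfolding d_plus_def using r_plus_bounds[of q' e' w'] assms
    by (intro ereal_minus_diff_eq[symmetric]) (auto simp: apo_def)
  finally show ?thesis .
qed

lemma delta_int_ge:
  assumes "0 \<le> q'" "0 \<le> e'" "e' \<le> 1" "0 \<le> q" "0 \<le> e" "e \<le> 1"
  shows "ereal q' - apo q e \<le> delta_int q' e' q e w w'"
  unfolding delta_int_def d_minus_eq_d_plus using assms d_plus_ge by simp

lemma delta_ext_ge:
  assumes "0 \<le> q'" "0 \<le> e'" "e' < 1" "0 \<le> q" "0 \<le> e" "e \<le> 1"
  shows "ereal q - apo q' e' \<le> delta_ext q' e' q e w w'"
  unfolding delta_ext_def d_minus_eq_d_plus using assms neg_d_plus_ge by simp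

lemma d_plus_apsides: "0 \<le> e \<Longrightarrow> d_plus q' e' q e 0 pi = apo q' e' - ereal q"
  by (simp add: d_plus_def r_plus_zero r_plus_pi)

lemma d_minus_apsides: "0 \<le> e' \<Longrightarrow> d_minus q' e' q e 0 pi = ereal q' - apo q e"
  by (simp add: d_minus_eq_d_plus d_plus_def r_plus_zero r_plus_pi)

lemma delta_int_apsides:
  assumes "0 \<le> q'" "0 \<le> e'" "e' \<le> 1" "0 \<le> q" "0 \<le> e" "e \<le> 1"
  shows "delta_int q' e' q e 0 pi = ereal q' - apo q e"
proof -
  have "ereal q' - apo q e \<le> apo q' e' - ereal q"
    using assms apo_ge_perihelion by (intro ereal_minus_mono) auto
  then show ?thesis
    using assms by (simp add: delta_int_def d_plus_apsides d_minus_apsides)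
qed

lemma delta_ext_apsides:
  assumes "0 \<le> q'" "0 \<le> e'" "e' \<le> 1" "0 \<le> q" "0 \<le> e" "e \<le> 1"
  shows "delta_ext q' e' q e 0 pi = ereal q - apo q' e'"
proof -
  have "ereal q - apo q' e' \<le> apo q e - ereal q'"
    using assms apo_ge_perihelion by (intro ereal_minus_mono) auto
  then show ?thesis
    using assms by (simp add: delta_ext_def d_plus_apsides d_minus_apsides ereal_minus_diff_eq)
qed

lemma apsides_in_D3: "(0, pi) \<in> D3"
  by (simp add: D3_def)

lemma internal_nodes_iff:
  assumes "0 \<le> q'" "0 \<le> e'" "e' \<le> 1" "0 \<le> q" "0 \<le> e" "e \<le> 1"
  shows "(\<forall>(w, w') \<in> D3. d_plus q' e' q e w w' > 0 \<and> d_minus q' e' q e w w' > 0)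
           \<longleftrightarrow> ereal q' - apo q e > 0"
  using apsides_in_D3 d_minus_apsides[of e' q' q e] assms
    delta_int_ge[of q' e' q e] less_le_trans
  by (fastforce simp: delta_int_def)

lemma external_nodes_iff:
  assumes "0 \<le> q'" "0 \<le> e'" "e' < 1" "0 \<le> q" "0 \<le> e" "e \<le> 1"
  shows "(\<forall>(w, w') \<in> D3. d_plus q' e' q e w w' < 0 \<and> d_minus q' e' q e w w' < 0)
           \<longleftrightarrow> ereal q - apo q' e' > 0"
proof
  assume "\<forall>(w, w') \<in> D3. d_plus q' e' q e w w' < 0 \<and> d_minus q' e' q e w w' < 0"
  then have "apo q' e' - ereal q < 0"
    using apsides_in_D3 d_plus_apsides[of e q' e' q] assms by fastforce
  then show "ereal q - apo q' e' > 0"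
    using assms by (simp add: apo_def)
next
  assume "ereal q - apo q' e' > 0"
  then have "delta_ext q' e' q e w w' > 0" for w w'
    using delta_ext_ge[of q' e' q e w w'] assms by simp
  then show "\<forall>(w, w') \<in> D3. d_plus q' e' q e w w' < 0 \<and> d_minus q' e' q e w w' < 0"
    by (simp add: delta_ext_def)
qed

lemma le_apo_imp_mult_le:
  assumes "0 \<le> q" "0 \<le> e" "e \<le> 1" "ereal r \<le> apo q e"
  shows "r * (1 - e) \<le> q * (1 + e)"
  using assms by (cases "e = 1") (auto simp: apo_def pos_le_divide_eq mult.commute)

lemma r_plus_arccos:
  assumes "0 < q" "0 < e" "0 < r" "-1 \<le> c" "c \<le> 1"
    and c: "c = (q * (1 + e) / r - 1) / e"
  shows "r_plus q e (arccos c) = ereal r"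
proof -
  have "1 + e * c = q * (1 + e) / r"
    using assms by simp
  then show ?thesis
    using assms by (simp add: r_plus_def)
qed

lemma r_plus_attains_near:
  assumes "0 < q" "0 < e" "q \<le> r" "r \<le> q * (1 + e)"
  shows "\<exists>w. 0 \<le> w \<and> w \<le> pi / 2 \<and> r_plus q e w = ereal r"
proof -
  define c where "c = (q * (1 + e) / r - 1) / e"
  have r: "0 < r"
    using assms by linarith
  have "q * (1 + e) \<le> (1 + e) * r"
    using assms by (simp add: mult_right_mono mult.commute)
  then have "1 \<le> q * (1 + e) / r" "q * (1 + e) / r \<le> 1 + e"
    using assms(4) by (simp_all add: pos_le_divide_eq[OF r] pos_divide_le_eq[OF r])
  then have c: "0 \<le> c" "c \<le> 1"
    using \<open>0 < e\<close> unfolding c_def by (simp_all add: pos_le_divide_eq pos_divide_le_eq)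
  have "r_plus q e (arccos c) = ereal r"
    using assms c by (intro r_plus_arccos[OF _ _ _ _ _ c_def]) auto
  moreover have "0 \<le> arccos c" "arccos c \<le> pi / 2"
    using c arccos_lbound arccos_le_pi2 by auto
  ultimately show ?thesis
    by blast
qed

lemma r_minus_attains_far:
  assumes "0 < q" "0 < e" "e \<le> 1" "q * (1 + e) \<le> r" "ereal r \<le> apo q e"
  shows "\<exists>w. 0 \<le> w \<and> w \<le> pi / 2 \<and> r_minus q e w = ereal r"
proof -
  define c where "c = (q * (1 + e) / r - 1) / e"
  have "0 < r"
    using assms mult_pos_pos[of q "1 + e"] by linarith
  then have "1 - e \<le> q * (1 + e) / r" "q * (1 + e) / r \<le> 1"
    using assms le_apo_imp_mult_le[of q e r]
    by (simp_all add: le_divide_eq divide_le_eq mult.commute)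
  then have c: "-1 \<le> c" "c \<le> 0"
    using \<open>0 < e\<close> unfolding c_def by (simp_all add: pos_le_divide_eq pos_divide_le_eq)
  have "r_minus q e (arccos (- c)) = ereal r"
    using assms c \<open>0 < r\<close> r_plus_arccos[OF _ _ _ _ _ c_def]
    by (simp add: r_minus_eq_r_plus_pi_minus arccos_minus)
  then show ?thesis
    using c arccos_lbound[of "- c"] arccos_le_pi2[of "- c"] by fastforce
qed

lemma r_plus_attains:
  assumes "0 < q" "0 < e" "e \<le> 1" "q \<le> r" "ereal r \<le> apo q e"
  shows "\<exists>w. 0 \<le> w \<and> w \<le> pi \<and> r_plus q e w = ereal r"
proof (cases "r \<le> q * (1 + e)")
  case True
  then show ?thesis
    using r_plus_attains_near[of q e r] assms by force
next
  case False
  then obtain w where "0 \<le> w" "w \<le> pi / 2" "r_minus q e w = ereal r"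
    using r_minus_attains_far[of q e r] assms by auto
  then show ?thesis
    unfolding r_minus_eq_r_plus_pi_minus by (intro exI[of _ "pi - w"]) auto
qed

lemma ex_D3_d_plus_mult_d_minus_eq_0:
  assumes "0 < q'" "0 < e'" "e' \<le> 1" "0 < q" "0 \<le> e" "e \<le> 1"
    and "ereal q' \<le> apo q e" "ereal q \<le> apo q' e'"
  shows "\<exists>(w, w') \<in> D3. d_plus q' e' q e w w' * d_minus q' e' q e w w' = 0"
proof -
  consider "q' \<le> q" | "q < q'" "q' \<le> q * (1 + e)" | "q * (1 + e) < q'"
    by linarith
  then show ?thesis
  proof cases
    case 1
    then obtain w' where "0 \<le> w'" "w' \<le> pi" "r_plus q' e' w' = ereal q"
      using r_plus_attains[of q' e' q] assms by auto
    then have "(0, w') \<in> D3" "d_plus q' e' q e 0 w' = 0"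
      using assms by (simp_all add: D3_def d_plus_def r_plus_zero)
    then show ?thesis by force
  next
    case 2
    then have "0 < e"
      using assms by (cases "e = 0") auto
    then obtain w where "0 \<le> w" "w \<le> pi / 2" "r_plus q e w = ereal q'"
      using r_plus_attains_near[of q e q'] 2 assms by auto
    then have "(w, 0) \<in> D3" "d_plus q' e' q e w 0 = 0"
      using assms by (simp_all add: D3_def d_plus_def r_plus_zero)
    then show ?thesis by force
  next
    case 3
    then have "0 < e"
      using assms by (cases "e = 0") (auto simp: apo_def)
    then obtain w where "0 \<le> w" "w \<le> pi / 2" "r_minus q e w = ereal q'"
      using r_minus_attains_far[of q e q'] 3 assms by auto
    then have "(w, pi) \<in> D3" "d_minus q' e' q e w pi = 0"
      using assms by (simp_all add: D3_def d_minus_def r_minus_eq_r_plus_pi_minus r_plus_zero)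
    then show ?thesis by force
  qed
qed

theorem lemma5:
  fixes q' e' qmax :: real
  assumes "q' > 0" and "0 < e'" and "e' < 1" and "qmax > 0"
  defines "Q' \<equiv> q' * (1 + e') / (1 - e')"
  shows
    "(\<forall>(q, e) \<in> D4 qmax.
        (\<forall>(w, w') \<in> D3.
            delta_int q' e' q e w w' \<ge> delta_int q' e' q e 0 pi
          \<and> delta_ext q' e' q e w w' \<ge> delta_ext q' e' q e 0 pi)
      \<and> delta_int q' e' q e 0 pi = ereal q' - apo q e
      \<and> delta_ext q' e' q e 0 pi = ereal (q - Q')
      \<and> ((\<forall>(w, w') \<in> D3. d_plus q' e' q e w w' > 0 \<and> d_minus q' e' q e w w' > 0)
           \<longleftrightarrow> ereal q' - apo q e > 0)
      \<and> ((\<forall>(w, w') \<in> D3. d_plus q' e' q e w w' < 0 \<and> d_minus q' e' q e w w' < 0)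
           \<longleftrightarrow> q - Q' > 0))
   \<and> (\<forall>(q, e) \<in> D4 qmax.
        ereal q' - apo q e \<le> 0 \<and> q - Q' \<le> 0 \<longrightarrow>
        (\<exists>(w, w') \<in> D3. d_plus q' e' q e w w' * d_minus q' e' q e w w' = 0))"
proof -
  have apo': "apo q' e' = ereal Q'"
    using assms(3) by (simp add: apo_def Q'_def)
  show ?thesis
    unfolding D4_def
    apply (intro conjI; clarify)
    subgoal premises orbit for q e
    proof -
      have "delta_int q' e' q e 0 pi = ereal q' - apo q e"
        using delta_int_apsides orbit assms by simp
      moreover have "delta_ext q' e' q e 0 pi = ereal (q - Q')"
        using delta_ext_apsides[of q' e' q e] orbit assms by (simp add: apo')
      ultimately show ?thesis
        using delta_int_ge[of q' e' q e] delta_ext_ge[of q' e' q e]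
          internal_nodes_iff[of q' e' q e] external_nodes_iff[of q' e' q e] orbit assms
        by (simp add: apo')
    qed
    subgoal premises orbit for q e
    proof -
      have "ereal q' \<le> apo q e"
        using orbit(5) by (cases "apo q e") auto
      then show ?thesis
        using ex_D3_d_plus_mult_d_minus_eq_0[of q' e' q e] orbit assms by (simp add: apo')
    qed
    done
qed

end
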